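(* Let $a>0$, $b,d,b',d'\in\mathbb{C}$ with positive real parts, $b+d=b'+d'$, $\bar d=b$, $\bar d'=b'$, let $x,y\in\mathbb{R}$ and $k\in\mathbb{Z}_+$. Then $$\sum_{j=0}^k\frac{(-k)_j(2a+b+d)_{2j}\,j!}{(2a)_j(b+d)_j(2a+b+d+j-1)_j(a+d)_j(a+d')_j(2a+b+d+k)_j}\,p_j(x;a,b,a,d)\,p_j(y;a,b',a,d')$$ $$=\frac{(d-ix)_k(d'-iy)_k(2a+b+d)_k}{(a+d)_k(a+d')_k(b+d)_k}\,{}_4F_3\!\left({-k,\ 1-k-b-d,\ a+ix,\ a+iy\atop 2a,\ 1-k-d+ix,\ 1-k-d'+iy};1\right).$$
   Context: Continuous Hahn polynomials: $p_n(x;a,b,c,d)=i^n\frac{(a+c)_n(a+d)_n}{n!}\,{}_3F_2\!\left({-n,\ n+a+b+c+d-1,\ a+ix\atop a+c,\ a+d};1\right)$; $(\alpha)_n$ is the Pochhammer symbol. *)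

theory Defs
  imports Complex_Main
begin

text \<open>For the terminating
  series used here (a numerator parameter -n) all terms beyond n vanish.\<close>

definition hyp_term :: "complex list \<Rightarrow> complex list \<Rightarrow> complex \<Rightarrow> nat \<Rightarrow> complex" where
  "hyp_term as bs z j =
     (\<Prod>a\<leftarrow>as. pochhammer a j) / (\<Prod>b\<leftarrow>bs. pochhammer b j) * z ^ j / fact j"

definition hypergeom :: "complex list \<Rightarrow> complex list \<Rightarrow> complex \<Rightarrow> complex" where
  "hypergeom as bs z = (\<Sum>j. hyp_term as bs z j)"

definition cont_hahn :: "nat \<Rightarrow> real \<Rightarrow> complex \<Rightarrow> complex \<Rightarrow> complex \<Rightarrow> complex \<Rightarrow> complex" where
  "cont_hahn n x a b c d =
     \<i> ^ n * pochhammer (a + c) n * pochhammer (a + d) n / fact n *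
     hypergeom [- of_nat n, of_nat n + a + b + c + d - 1, a + \<i> * of_real x]
               [a + c, a + d] 1"

end

theory Submission
  imports Defs "HOL-Computational_Algebra.Formal_Power_Series"
begin

text \<open>
  Write \<open>c = 2a\<close>, \<open>s = b + d\<close> and \<open>\<lambda>(j) = j(j + c + s - 1)\<close>. For \<open>j \<le> k\<close> the
  \<open>\<^sub>3F\<^sub>2\<close> defining \<open>p\<^sub>j(x; a, b, a, d)\<close> is a combination of the polynomials
  \<open>(-j)\<^sub>n (j + c + s - 1)\<^sub>n\<close> in \<open>\<lambda>(j)\<close>; multiplying it by \<open>(a + d)\<^sub>k\<close> and resumming with
  Chu--Vandermonde turns it into \<open>\<Sum>\<^sub>m binom(k, m) (a + ix)\<^sub>m (d - ix)\<^bsub>k-m\<^esub> R\<^sub>m(j)\<close>, where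
  the \<open>R\<^sub>m\<close> are dual Hahn polynomials on \<open>{0..k}\<close>. The coefficients of the sum on the left,
  together with the normalising factors of the \<open>p\<^sub>j\<close>, form the orthogonality weight of the
  \<open>R\<^sub>m\<close>, so Parseval's identity collapses the double expansion to a single sum over \<open>m\<close>,
  which is the \<open>\<^sub>4F\<^sub>3\<close> on the right.

  Orthogonality is reduced to the moments of the weight against \<open>(-j)\<^sub>l (j + c + s - 1)\<^sub>l\<close> and
  \<open>(c + j)\<^sub>i (1 - s - j)\<^sub>i\<close>; shifting \<open>j\<close> and a recursion in \<open>i\<close> reduce these to Bailey's
  very-well-poised sum \<open>\<Sum>\<^sub>j w\<^sub>k(j) = (c + s)\<^sub>k / (s)\<^sub>k\<close>, which is proved by a WZ telescoping
  in \<open>k\<close>.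
\<close>

section \<open>Pochhammer symbols and finite sums\<close>

lemma pochhammer_nonzero_if_Re_pos: "0 < Re z \<Longrightarrow> pochhammer (z::complex) n \<noteq> 0"
  by (auto simp: pochhammer_eq_0_iff)

lemma pochhammer_shifted_nonzero_if_Re_pos:
  assumes "0 < Re z"
  shows "pochhammer (z - 1 + of_nat n :: complex) n \<noteq> 0"
proof (cases n)
  case (Suc m)
  then show ?thesis using assms by (intro pochhammer_nonzero_if_Re_pos) simp
qed simp

lemma pochhammer_one_minus_nonzero:
  assumes "0 < Re s" and "m \<le> k"
  shows "pochhammer (1 - s - of_nat k :: complex) m \<noteq> 0"
proof
  assume "pochhammer (1 - s - of_nat k :: complex) m = 0"
  then obtain r where "r < m" "1 - s - of_nat k = - of_nat r"
    by (auto simp: pochhammer_eq_0_iff)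
  then have "Re s = 1 - real k + real r"
    by (simp add: complex_eq_iff)
  with assms \<open>r < m\<close> show False
    by linarith
qed

lemma pochhammer_reflect: "pochhammer (x::'a::comm_ring_1) n = (-1)^n * pochhammer (1 - x - of_nat n) n"
  using pochhammer_minus[of "- x" n] by (simp add: algebra_simps)

lemma pochhammer_one_minus_times_pochhammer:
  fixes s :: "'a::comm_ring_1"
  assumes "i \<le> k"
  shows "pochhammer (1 - s - of_nat k) i * pochhammer s (k - i) = (-1)^i * pochhammer s k"
proof -
  have "pochhammer s k = pochhammer s (k - i) * pochhammer (s + of_nat (k - i)) i"
    using pochhammer_product'[of s "k - i" i] assms by simp
  moreover have "pochhammer (1 - s - of_nat k) i = (-1)^i * pochhammer (s + of_nat (k - i)) i"
    using pochhammer_reflect[of "1 - s - of_nat k" i] assms by (simp add: of_nat_diff algebra_simps)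
  moreover have "((-1::'a)^i * (-1)^i) = 1"
    by (simp flip: power_add)
  ultimately show ?thesis
    by (simp add: mult_ac)
qed

lemma pochhammer_div_reflect:
  fixes D :: "'a::field_char_0"
  assumes "m \<le> k" and "pochhammer (1 - D - of_nat k) m \<noteq> 0"
  shows "pochhammer D k / pochhammer (1 - D - of_nat k) m = (-1)^m * pochhammer D (k - m)"
proof -
  have "pochhammer D k = pochhammer D (k - m) * pochhammer (D + of_nat (k - m)) m"
    using pochhammer_product'[of D "k - m" m] assms by simp
  moreover have "pochhammer (1 - D - of_nat k) m = (-1)^m * pochhammer (D + of_nat (k - m)) m"
    using pochhammer_reflect[of "1 - D - of_nat k" m] assms by (simp add: of_nat_diff algebra_simps)
  moreover have "((-1::'a)^m)^2 = 1"
    by (simp flip: power_mult)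
  ultimately show ?thesis
    using assms(2) by (simp add: field_simps power2_eq_square)
qed

lemma pochhammer_minus_of_nat:
  "pochhammer (- of_nat m :: 'a::field_char_0) l = (-1)^l * of_nat (m choose l) * fact l"
proof -
  have "(-1)^l * of_nat (m choose l) * fact l = ((-1::'a)^l * (-1)^l) * pochhammer (- of_nat m) l"
    unfolding binomial_gbinomial gbinomial_pochhammer by simp
  moreover have "(-1::'a)^l * (-1)^l = 1" by (simp flip: power_mult_distrib)
  ultimately show ?thesis by simp
qed

lemma pochhammer_minus_of_nat_add:
  "pochhammer (- of_nat (l + t) :: 'a::field_char_0) l = (-1)^l * (fact (l + t) / fact t)"
proof -
  have "pochhammer (- of_nat (l + t) :: 'a) l = (-1)^l * pochhammer (of_nat (l + t) - of_nat l + 1) l"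
    by (rule pochhammer_minus)
  moreover have "fact (t + l) = (fact t :: 'a) * pochhammer (of_nat t + 1) l"
    using pochhammer_product'[of "1::'a" t l] by (simp add: pochhammer_fact add.commute)
  ultimately show ?thesis by (simp add: add.commute)
qed

lemma pochhammer_minus_of_nat_delta_sum:
  "(\<Sum>i\<le>n. pochhammer (- of_nat n :: 'a::field_char_0) i * pochhammer (- of_nat i) m / fact i)
     = (if m = n then fact m else 0)"
proof (cases "m \<le> n")
  case False
  then have "pochhammer (- of_nat i :: 'a) m = 0" if "i \<le> n" for i
    using that by (simp add: pochhammer_of_nat_eq_0_lemma)
  with False show ?thesis by simp
next
  case True
  then obtain r where n: "n = m + r"
    using le_Suc_ex by blast
  have "(\<Sum>i\<le>n. pochhammer (- of_nat n :: 'a) i * pochhammer (- of_nat i) m / fact i)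
      = (\<Sum>i\<in>{m..m + r}. pochhammer (- of_nat n :: 'a) i * pochhammer (- of_nat i) m / fact i)"
    unfolding n by (rule sum.mono_neutral_right) (auto simp: pochhammer_of_nat_eq_0_lemma)
  also have "\<dots> = (\<Sum>t\<le>r. pochhammer (- of_nat n :: 'a) (m + t) * pochhammer (- of_nat (m + t)) m / fact (m + t))"
    using sum.shift_bounds_cl_nat_ivl[of "\<lambda>i. pochhammer (- of_nat n :: 'a) i * pochhammer (- of_nat i) m / fact i" 0 m r]
    by (simp add: atLeast0AtMost add.commute)
  also have "\<dots> = (-1)^m * pochhammer (- of_nat n) m * (\<Sum>t\<le>r. (-1)^t * of_nat (r choose t))"
    unfolding sum_distrib_left
  proof (rule sum.cong[OF refl])
    fix t
    have "pochhammer (- of_nat n :: 'a) (m + t) = pochhammer (- of_nat n) m * pochhammer (- of_nat r) t"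
      unfolding n using pochhammer_product'[of "- of_nat (m + r) :: 'a" m t] by simp
    then show "pochhammer (- of_nat n :: 'a) (m + t) * pochhammer (- of_nat (m + t)) m / fact (m + t)
        = (-1)^m * pochhammer (- of_nat n) m * ((-1)^t * of_nat (r choose t))"
      unfolding pochhammer_minus_of_nat_add pochhammer_minus_of_nat[of r t] by (simp add: field_simps)
  qed
  also have "\<dots> = (if m = n then fact m else 0)"
    using n choose_alternating_sum[of r, where 'a='a] by (auto simp: pochhammer_same)
  finally show ?thesis .
qed

lemma choose_diff_mult_pochhammer_minus_of_nat:
  assumes "n \<le> m" "m \<le> k"
  shows "of_nat ((k - n) choose (m - n)) * pochhammer (- of_nat k :: 'a::field_char_0) n
       = of_nat (k choose m) * pochhammer (- of_nat m) n"
proof -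
  have "(k choose m) * (m choose n) = (k choose n) * ((k - n) choose (m - n))"
    using assms by (rule choose_mult)
  then have "(of_nat (k choose m) * of_nat (m choose n) :: 'a) = of_nat (k choose n) * of_nat ((k - n) choose (m - n))"
    by (metis of_nat_mult)
  then show ?thesis
    unfolding pochhammer_minus_of_nat by (simp add: mult_ac)
qed

lemma sum_atMost_triangle_swap:
  "(\<Sum>n\<le>k. \<Sum>m\<in>{n..k}. f n m) = (\<Sum>m\<le>(k::nat). \<Sum>n\<le>m. f n m)"
proof -
  have "{m. m \<in> {..k} \<and> n \<le> m} = {n..k}" for n
    by auto
  moreover have "{n. n \<in> {..k} \<and> n \<le> m} = {..m}" if "m \<le> k" for m
    using that by auto
  ultimately show ?thesis
    using sum.swap_restrict[of "{..k}" "{..k}" f "(\<le>)"] by simp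
qed

lemma pochhammer_shifted_binomial_sum:
  fixes u A :: "'a::comm_ring_1"
  assumes "n \<le> k"
  shows "pochhammer u n * pochhammer (A + of_nat n) (k - n)
       = (\<Sum>m\<in>{n..k}. of_nat ((k - n) choose (m - n)) * (pochhammer u m * pochhammer (A - u) (k - m)))"
proof -
  have shift: "pochhammer u (r + n) = pochhammer u n * pochhammer (u + of_nat n) r" for r
    by (metis add.commute pochhammer_product')
  have "pochhammer u n * pochhammer (A + of_nat n) (k - n) = pochhammer u n * pochhammer ((u + of_nat n) + (A - u)) (k - n)"
    by (simp add: algebra_simps)
  also have "\<dots> = (\<Sum>r\<le>k - n. of_nat ((k - n) choose r) * (pochhammer u (r + n) * pochhammer (A - u) (k - (r + n))))"
    unfolding pochhammer_binomial_sum[of "u + of_nat n" "A - u" "k - n"] sum_distrib_left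
    by (intro sum.cong refl) (simp add: shift add.commute mult_ac)
  also have "\<dots> = (\<Sum>m\<in>{n..k}. of_nat ((k - n) choose (m - n)) * (pochhammer u m * pochhammer (A - u) (k - m)))"
    using sum.shift_bounds_cl_nat_ivl[of "\<lambda>m. of_nat ((k - n) choose (m - n)) * (pochhammer u m * pochhammer (A - u) (k - m))" 0 n "k - n"] assms
    by (simp add: atLeast0AtMost)
  finally show ?thesis .
qed

lemma chu_vandermonde:
  assumes "pochhammer c m \<noteq> (0::complex)"
  shows "(\<Sum>l\<le>m. pochhammer (- of_nat m) l * pochhammer b l / (pochhammer c l * fact l))
       = pochhammer (c - b) m / pochhammer c m"
proof -
  have "\<forall>i \<in> {0..<m}. c \<noteq> - of_nat i"
    using assms by (auto simp: pochhammer_eq_0_iff)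
  from Vandermonde_pochhammer[OF this, of b] show ?thesis
    by (simp add: atLeast0AtMost mult_ac)
qed

section \<open>Bailey's sum of the dual Hahn weight\<close>

text \<open>Proportional to the weight of the dual Hahn polynomials \<open>R\<^sub>m(\<lambda>(j); c - 1, s - 1, k)\<close>,
  normalised to \<open>1\<close> at \<open>j = 0\<close>.\<close>

definition dual_hahn_weight :: "complex \<Rightarrow> complex \<Rightarrow> nat \<Rightarrow> nat \<Rightarrow> complex" where
  "dual_hahn_weight c s k j =
     (-1)^j * pochhammer (- of_nat k) j * pochhammer (c + s) (2 * j) * pochhammer c j /
     (fact j * pochhammer s j * pochhammer (c + s - 1 + of_nat j) j * pochhammer (c + s + of_nat k) j)"

text \<open>The WZ pair for Bailey's sum. \<open>bailey_term c s k j\<close> is the weight at \<open>k + 1\<close> with its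
  last Pochhammer symbol taken at \<open>k\<close>; every term of the recurrence is a rational multiple of it.\<close>

definition bailey_term :: "complex \<Rightarrow> complex \<Rightarrow> nat \<Rightarrow> nat \<Rightarrow> complex" where
  "bailey_term c s k j =
     (-1)^j * pochhammer (- of_nat (Suc k)) j * pochhammer (c + s) (2 * j) * pochhammer c j /
     (fact j * pochhammer s j * pochhammer (c + s - 1 + of_nat j) j * pochhammer (c + s + of_nat k) j)"

definition bailey_certificate :: "complex \<Rightarrow> complex \<Rightarrow> nat \<Rightarrow> nat \<Rightarrow> complex" where
  "bailey_certificate c s k j =
     - (of_nat j * (s + of_nat j - 1) / ((c + s - 1 + 2 * of_nat j) * of_nat (Suc k))) * bailey_term c s k j"

lemma dual_hahn_weight_Suc_eq_bailey_term:
  assumes c: "0 < Re c" and s: "0 < Re s"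
  shows "dual_hahn_weight c s (Suc k) j = (c + s + of_nat k) / (c + s + of_nat k + of_nat j) * bailey_term c s k j"
proof -
  define K where "K = c + s + of_nat k"
  have nz: "K \<noteq> 0" "K + of_nat j \<noteq> 0"
    using c s unfolding K_def by (auto simp: complex_eq_iff)
  have "K * pochhammer (K + 1) j = pochhammer K j * (K + of_nat j)"
    by (metis pochhammer_Suc pochhammer_rec)
  moreover have "c + s + of_nat (Suc k) = K + 1"
    unfolding K_def by simp
  ultimately have shift: "pochhammer (c + s + of_nat (Suc k)) j = pochhammer K j * (K + of_nat j) / K"
    using nz by (simp add: field_simps)
  have "pochhammer K j \<noteq> 0" "pochhammer s j \<noteq> 0" "pochhammer (c + s - 1 + of_nat j) j \<noteq> 0"
    using c s unfolding K_def
    by (auto intro!: pochhammer_nonzero_if_Re_pos pochhammer_shifted_nonzero_if_Re_pos)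
  then show ?thesis
    using nz unfolding dual_hahn_weight_def shift bailey_term_def K_def[symmetric] by (simp add: field_simps)
qed

lemma dual_hahn_weight_eq_bailey_term:
  "dual_hahn_weight c s k j = (of_nat (Suc k) - of_nat j) / of_nat (Suc k) * bailey_term c s k j"
proof -
  have "pochhammer (- of_nat (Suc k) :: complex) (Suc j) = - of_nat (Suc k) * pochhammer (- of_nat k) j"
    using pochhammer_rec[of "- of_nat (Suc k) :: complex" j] by simp
  then have "of_nat (Suc k) * pochhammer (- of_nat k :: complex) j
      = pochhammer (- of_nat (Suc k)) j * (of_nat (Suc k) - of_nat j)"
    by (simp add: pochhammer_Suc algebra_simps)
  then have lower: "pochhammer (- of_nat k :: complex) j
      = pochhammer (- of_nat (Suc k)) j * (of_nat (Suc k) - of_nat j) / of_nat (Suc k)"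
    by (simp add: field_simps del: of_nat_Suc)
  show ?thesis
    unfolding dual_hahn_weight_def lower bailey_term_def by (simp add: field_simps del: of_nat_Suc)
qed

lemma bailey_term_Suc:
  assumes c: "0 < Re c" and s: "0 < Re s" and "0 < j"
  shows "bailey_term c s k (Suc j) = bailey_term c s k j *
    ((of_nat (Suc k) - of_nat j) * (c + s + 2 * of_nat j + 1) * (c + of_nat j) * (c + s - 1 + of_nat j) /
     ((of_nat j + 1) * (s + of_nat j) * (c + s - 1 + 2 * of_nat j) * (c + s + of_nat k + of_nat j)))"
proof -
  define L where "L = c + s - 1"
  define K where "K = c + s + of_nat k"
  define N where "N = (\<lambda>j. (-1)^j * pochhammer (- of_nat (Suc k)) j * pochhammer (c + s) (2 * j) * pochhammer c j)"
  define D where "D = (\<lambda>j. fact j * pochhammer s j * pochhammer (L + of_nat j) j * pochhammer K j)"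
  define a where "a = (of_nat (Suc k) - of_nat j) * (L + 2 * of_nat j + 1) * (L + 2 * of_nat j + 2) * (c + of_nat j)"
  define b where "b = (of_nat j + 1) * (s + of_nat j) * (L + 2 * of_nat j) * (L + 2 * of_nat j + 1) * (K + of_nat j)"
  have quotient: "bailey_term c s k i = N i / D i" for i
    unfolding bailey_term_def N_def D_def L_def K_def ..
  have nz: "L + of_nat j \<noteq> 0" "L + 2 * of_nat j + 1 \<noteq> 0"
    using c s \<open>0 < j\<close> unfolding L_def by (auto simp: complex_eq_iff)
  have N_Suc: "N (Suc j) = N j * a"
    unfolding N_def a_def L_def by (simp add: pochhammer_Suc numeral_2_eq_2 algebra_simps)
  have diag: "(L + of_nat j) * pochhammer (L + of_nat (Suc j)) (Suc j)
      = pochhammer (L + of_nat j) j * (L + 2 * of_nat j) * (L + 2 * of_nat j + 1)"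
  proof -
    have "pochhammer (L + of_nat j) (Suc (Suc j)) = (L + of_nat j) * pochhammer (L + of_nat j + 1) (Suc j)"
      by (rule pochhammer_rec)
    moreover have "pochhammer (L + of_nat j) (Suc (Suc j))
        = pochhammer (L + of_nat j) j * (L + 2 * of_nat j) * (L + 2 * of_nat j + 1)"
      by (simp add: pochhammer_Suc algebra_simps)
    ultimately show ?thesis by (simp add: add_ac)
  qed
  have D_Suc: "(L + of_nat j) * D (Suc j) = D j * b"
  proof -
    have "(L + of_nat j) * D (Suc j) = fact (Suc j) * pochhammer s (Suc j) *
        ((L + of_nat j) * pochhammer (L + of_nat (Suc j)) (Suc j)) * pochhammer K (Suc j)"
      unfolding D_def by (simp only: ac_simps)
    also have "\<dots> = D j * b"
      unfolding diag D_def b_def by (simp add: pochhammer_Suc ac_simps)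
    finally show ?thesis .
  qed
  have "bailey_term c s k (Suc j) = (N (Suc j) * (L + of_nat j)) / ((L + of_nat j) * D (Suc j))"
    unfolding quotient using nz by simp
  also have "\<dots> = bailey_term c s k j * (a * (L + of_nat j) / b)"
    unfolding N_Suc D_Suc quotient by (simp add: ac_simps)
  also have "a * (L + of_nat j) / b = (of_nat (Suc k) - of_nat j) * (L + 2 * of_nat j + 2) * (c + of_nat j) * (L + of_nat j) /
      ((of_nat j + 1) * (s + of_nat j) * (L + 2 * of_nat j) * (K + of_nat j))"
    unfolding a_def b_def using nz(2) by (simp add: ac_simps)
  finally show ?thesis
    unfolding L_def K_def by (simp add: algebra_simps)
qed

lemma bailey_certificate_Suc_0:
  assumes c: "0 < Re c" and s: "0 < Re s"
  shows "bailey_certificate c s k (Suc 0) = - c / (c + s + of_nat k)"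
proof -
  have "s \<noteq> 0" "c + s \<noteq> 0" "c + s + 1 \<noteq> 0" "c + s + of_nat k \<noteq> 0" "1 + of_nat k \<noteq> (0::complex)"
    using c s by (auto simp: complex_eq_iff)
  then show ?thesis
    unfolding bailey_certificate_def bailey_term_def
    by (simp add: numeral_2_eq_2 pochhammer_Suc divide_simps) (simp add: algebra_simps)
qed

lemma bailey_certificate_Suc:
  assumes c: "0 < Re c" and s: "0 < Re s" and "0 < j"
  shows "bailey_certificate c s k (Suc j)
       = - ((of_nat (Suc k) - of_nat j) * (c + of_nat j) * (c + s - 1 + of_nat j) /
            (of_nat (Suc k) * (c + s - 1 + 2 * of_nat j) * (c + s + of_nat k + of_nat j))) * bailey_term c s k j"
proof -
  have nz: "c + s - 1 + 2 * of_nat j \<noteq> 0" "c + s + 2 * of_nat j + 1 \<noteq> 0" "s + of_nat j \<noteq> 0"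
    "of_nat j + 1 \<noteq> (0::complex)" "c + s + of_nat k + of_nat j \<noteq> 0" "of_nat (Suc k) \<noteq> (0::complex)"
    using c s \<open>0 < j\<close> by (auto simp: complex_eq_iff)
  have factor: "of_nat (Suc j) * (s + of_nat (Suc j) - 1) / ((c + s - 1 + 2 * of_nat (Suc j)) * of_nat (Suc k))
      = (of_nat j + 1) * (s + of_nat j) / ((c + s + 2 * of_nat j + 1) * of_nat (Suc k))"
    by (simp add: algebra_simps)
  have cancel: "(of_nat j + 1) * (s + of_nat j) / ((c + s + 2 * of_nat j + 1) * of_nat (Suc k)) *
      ((of_nat (Suc k) - of_nat j) * (c + s + 2 * of_nat j + 1) * (c + of_nat j) * (c + s - 1 + of_nat j) /
       ((of_nat j + 1) * (s + of_nat j) * (c + s - 1 + 2 * of_nat j) * (c + s + of_nat k + of_nat j)))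
    = (of_nat (Suc k) - of_nat j) * (c + of_nat j) * (c + s - 1 + of_nat j) /
      (of_nat (Suc k) * (c + s - 1 + 2 * of_nat j) * (c + s + of_nat k + of_nat j))"
    unfolding times_divide_times_eq using nz
    by (subst frac_eq_eq) (simp_all add: ac_simps del: of_nat_Suc)
  show ?thesis
    unfolding bailey_certificate_def bailey_term_Suc[OF c s \<open>0 < j\<close>] factor cancel[symmetric]
    by (simp only: mult_minus_left mult_ac)
qed

lemma bailey_wz_step:
  assumes c: "0 < Re c" and s: "0 < Re s"
  shows "(s + of_nat k) / (c + s + of_nat k) * dual_hahn_weight c s (Suc k) j - dual_hahn_weight c s k j
       = bailey_certificate c s k (Suc j) - bailey_certificate c s k j"
proof -
  define K where "K = c + s + of_nat k"
  define T where "T = bailey_term c s k j"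
  have nz: "K \<noteq> 0" "K + of_nat j \<noteq> 0" "1 + of_nat k \<noteq> (0::complex)"
    using c s unfolding K_def by (auto simp: complex_eq_iff)
  have "(s + of_nat k) / K * dual_hahn_weight c s (Suc k) j - dual_hahn_weight c s k j
      = T * ((s + of_nat k) / (K + of_nat j) - (of_nat (Suc k) - of_nat j) / of_nat (Suc k))"
    unfolding dual_hahn_weight_Suc_eq_bailey_term[OF c s] dual_hahn_weight_eq_bailey_term[of c s k j] K_def[symmetric] T_def
    using nz(1) by (simp add: right_diff_distrib mult_ac)
  also have "\<dots> = bailey_certificate c s k (Suc j) - bailey_certificate c s k j"
  proof (cases j)
    case 0
    then have "T = 1" "bailey_certificate c s k j = 0"
      unfolding bailey_certificate_def T_def by (simp_all add: bailey_term_def)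
    then show ?thesis
      using nz unfolding 0 bailey_certificate_Suc_0[OF c s] K_def by (simp add: field_simps)
  next
    case (Suc i)
    then have "0 < j"
      by simp
    define Y where "Y = (of_nat (Suc k) - of_nat j) * (c + of_nat j) * (c + s - 1 + of_nat j) /
      (of_nat (Suc k) * (c + s - 1 + 2 * of_nat j) * (K + of_nat j))"
    have "c + s - 1 + 2 * of_nat j \<noteq> 0"
      using c s \<open>0 < j\<close> by (auto simp: complex_eq_iff)
    then have "(s + of_nat k) / (K + of_nat j) - (of_nat (Suc k) - of_nat j) / of_nat (Suc k)
        = - Y + of_nat j * (s + of_nat j - 1) / ((c + s - 1 + 2 * of_nat j) * of_nat (Suc k))"
      unfolding Y_def using nz by (simp add: divide_simps del: of_nat_Suc) (simp add: K_def algebra_simps)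
    moreover have "t * (- y + q) = - y * t - (- q * t)" for t y q :: complex
      by (simp add: algebra_simps)
    ultimately show ?thesis
      unfolding bailey_certificate_Suc[OF c s \<open>0 < j\<close>] bailey_certificate_def[of c s k j]
        T_def[symmetric] Y_def[unfolded K_def, symmetric]
      by simp
  qed
  finally show ?thesis
    unfolding K_def .
qed

lemma dual_hahn_weight_sum:
  assumes c: "0 < Re c" and s: "0 < Re s"
  shows "(\<Sum>j\<le>k. dual_hahn_weight c s k j) = pochhammer (c + s) k / pochhammer s k"
proof (induction k)
  case 0
  then show ?case by (simp add: dual_hahn_weight_def)
next
  case (Suc k)
  define S where "S = (\<Sum>j\<le>Suc k. dual_hahn_weight c s (Suc k) j)"
  have nz: "c + s + of_nat k \<noteq> 0" "s + of_nat k \<noteq> 0" "pochhammer s k \<noteq> 0"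
    using c s pochhammer_nonzero_if_Re_pos[OF s] by (auto simp: complex_eq_iff)
  have "bailey_certificate c s k 0 = 0" "bailey_certificate c s k (Suc (Suc k)) = 0"
    by (simp_all add: bailey_certificate_def bailey_term_def pochhammer_of_nat_eq_0_lemma del: of_nat_Suc)
  then have "(\<Sum>j<Suc (Suc k). (s + of_nat k) / (c + s + of_nat k) * dual_hahn_weight c s (Suc k) j
      - dual_hahn_weight c s k j) = 0"
    by (simp only: bailey_wz_step[OF c s] sum_lessThan_telescope) simp
  then have "(s + of_nat k) / (c + s + of_nat k) * S = (\<Sum>j\<le>Suc k. dual_hahn_weight c s k j)"
    unfolding S_def by (simp only: sum_subtractf sum_distrib_left lessThan_Suc_atMost) simp
  also have "\<dots> = pochhammer (c + s) k / pochhammer s k"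
  proof -
    have "dual_hahn_weight c s k (Suc k) = 0"
      by (simp add: dual_hahn_weight_def pochhammer_of_nat_eq_0_lemma)
    then show ?thesis by (simp add: Suc.IH)
  qed
  finally have step: "(s + of_nat k) / (c + s + of_nat k) * S = pochhammer (c + s) k / pochhammer s k" .
  have "S = x / y * S * (y / x)" if "x \<noteq> 0" "y \<noteq> 0" for x y :: complex
    using that by simp
  from this[OF nz(2,1)] have "S = pochhammer (c + s) k / pochhammer s k * ((c + s + of_nat k) / (s + of_nat k))"
    unfolding step .
  then show ?case
    unfolding S_def by (simp add: pochhammer_Suc)
qed

section \<open>Moments of the dual Hahn weight\<close>

text \<open>\<open>(-j)\<^sub>l (j + c + s - 1)\<^sub>l\<close> is the product of \<open>r(r + c + s - 1) - \<lambda>(j)\<close> over \<open>r < l\<close>,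
  a polynomial of degree \<open>l\<close> in \<open>\<lambda>(j)\<close>.\<close>

definition quad_pochhammer :: "complex \<Rightarrow> complex \<Rightarrow> nat \<Rightarrow> nat \<Rightarrow> complex" where
  "quad_pochhammer c s l j = pochhammer (- of_nat j) l * pochhammer (of_nat j + c + s - 1) l"

lemma dual_hahn_weight_shift:
  assumes c: "0 < Re c" and s: "0 < Re s"
  shows "dual_hahn_weight c s (l + n) (l + t) * quad_pochhammer c s l (l + t)
     = pochhammer (- of_nat (l + n)) l * pochhammer (c + s) (2 * l) * pochhammer c l /
       (pochhammer s l * pochhammer (c + s + of_nat (l + n)) l)
       * dual_hahn_weight (c + of_nat l) (s + of_nat l) n t"
proof -
  have split_k: "pochhammer (- of_nat (l + n)) (l + t) = pochhammer (- of_nat (l + n)) l * pochhammer (- of_nat n :: complex) t"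
    using pochhammer_product'[of "- of_nat (l + n) :: complex" l t] by simp
  have split_cs: "pochhammer (c + s) (2 * (l + t)) = pochhammer (c + s) (2 * l) * pochhammer (c + of_nat l + (s + of_nat l)) (2 * t)"
    using pochhammer_product'[of "c + s" "2 * l" "2 * t"] by (simp add: algebra_simps)
  have split_c: "pochhammer c (l + t) = pochhammer c l * pochhammer (c + of_nat l) t"
    by (rule pochhammer_product')
  have split_s: "pochhammer s (l + t) = pochhammer s l * pochhammer (s + of_nat l) t"
    by (rule pochhammer_product')
  have split_diag: "pochhammer (c + s - 1 + of_nat (l + t)) (l + t)
      = pochhammer (of_nat (l + t) + (c + s - 1)) l * pochhammer (c + of_nat l + (s + of_nat l) - 1 + of_nat t) t"
    using pochhammer_product'[of "c + s - 1 + of_nat (l + t)" l t] by (simp add: algebra_simps)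
  have split_top: "pochhammer (c + s + of_nat (l + n)) (l + t)
      = pochhammer (c + s + of_nat (l + n)) l * pochhammer (c + of_nat l + (s + of_nat l) + of_nat n) t"
    using pochhammer_product'[of "c + s + of_nat (l + n)" l t] by (simp add: algebra_simps)
  have "of_nat (l + t) + (c + s - 1) = c + s + of_nat t - 1 + of_nat l"
    by simp
  then have "pochhammer (of_nat (l + t) + (c + s - 1)) l \<noteq> 0"
    using c s by (simp only:) (rule pochhammer_shifted_nonzero_if_Re_pos, simp)
  moreover have "pochhammer (c + of_nat l + (s + of_nat l) - 1 + of_nat t) t \<noteq> 0"
    using c s by (intro pochhammer_shifted_nonzero_if_Re_pos) simp
  moreover have "pochhammer s l \<noteq> 0" "pochhammer (s + of_nat l) t \<noteq> 0"
    "pochhammer (c + s + of_nat (l + n)) l \<noteq> 0" "pochhammer (c + of_nat l + (s + of_nat l) + of_nat n) t \<noteq> 0"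
    using c s by (auto intro!: pochhammer_nonzero_if_Re_pos)
  ultimately have nz: "pochhammer (of_nat (l + t) + (c + s - 1)) l \<noteq> 0"
    "pochhammer (c + of_nat l + (s + of_nat l) - 1 + of_nat t) t \<noteq> 0"
    "pochhammer s l \<noteq> 0" "pochhammer (s + of_nat l) t \<noteq> 0" "pochhammer (c + s + of_nat (l + n)) l \<noteq> 0"
    "pochhammer (c + of_nat l + (s + of_nat l) + of_nat n) t \<noteq> 0"
    by simp_all
  have sign: "(-1::complex)^l * (-1)^l = 1"
    by (simp flip: power_add)
  show ?thesis
    unfolding dual_hahn_weight_def quad_pochhammer_def split_k split_c split_s split_top pochhammer_minus_of_nat_add
    using nz sign by (simp only: split_cs split_diag) (simp add: field_simps power_add)
qed

lemma dual_hahn_moment: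
  assumes c: "0 < Re c" and s: "0 < Re s"
  shows "(\<Sum>j\<le>k. dual_hahn_weight c s k j * quad_pochhammer c s l j)
       = pochhammer (- of_nat k) l * pochhammer c l * pochhammer (c + s) k / pochhammer s k"
proof (cases "l \<le> k")
  case False
  then show ?thesis
    by (simp add: quad_pochhammer_def pochhammer_of_nat_eq_0_lemma)
next
  case True
  then obtain n where k: "k = l + n"
    using le_Suc_ex by blast
  define K where "K = pochhammer (- of_nat k) l * pochhammer (c + s) (2 * l) * pochhammer c l /
    (pochhammer s l * pochhammer (c + s + of_nat k) l)"
  have "(\<Sum>j\<le>k. dual_hahn_weight c s k j * quad_pochhammer c s l j)
      = (\<Sum>j\<in>{l..l + n}. dual_hahn_weight c s k j * quad_pochhammer c s l j)"
    unfolding k by (rule sum.mono_neutral_right) (auto simp: quad_pochhammer_def pochhammer_of_nat_eq_0_lemma)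
  also have "\<dots> = (\<Sum>t\<le>n. dual_hahn_weight c s (l + n) (l + t) * quad_pochhammer c s l (l + t))"
    unfolding k using sum.shift_bounds_cl_nat_ivl[of "\<lambda>j. dual_hahn_weight c s (l + n) j * quad_pochhammer c s l j" 0 l n]
    by (simp add: atLeast0AtMost add.commute)
  also have "\<dots> = K * (\<Sum>t\<le>n. dual_hahn_weight (c + of_nat l) (s + of_nat l) n t)"
    unfolding K_def k dual_hahn_weight_shift[OF c s] by (simp add: sum_distrib_left)
  also have "\<dots> = K * (pochhammer (c + of_nat l + (s + of_nat l)) n / pochhammer (s + of_nat l) n)"
    using c s by (simp add: dual_hahn_weight_sum)
  also have "\<dots> = pochhammer (- of_nat k) l * pochhammer c l * pochhammer (c + s) k / pochhammer s k"
  proof -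
    have "pochhammer (c + s) (2 * l + n) = pochhammer (c + s) (2 * l) * pochhammer (c + of_nat l + (s + of_nat l)) n"
      using pochhammer_product'[of "c + s" "2 * l" n] by (simp add: algebra_simps)
    moreover have "pochhammer (c + s) (k + l) = pochhammer (c + s) k * pochhammer (c + s + of_nat k) l"
      by (rule pochhammer_product')
    moreover have "2 * l + n = k + l"
      unfolding k by simp
    ultimately have "pochhammer (c + s) (2 * l) * pochhammer (c + of_nat l + (s + of_nat l)) n
        = pochhammer (c + s) k * pochhammer (c + s + of_nat k) l"
      by metis
    moreover have "pochhammer s k = pochhammer s l * pochhammer (s + of_nat l) n"
      unfolding k by (rule pochhammer_product')
    moreover have "pochhammer (c + s + of_nat k) l \<noteq> 0" "pochhammer s l \<noteq> 0" "pochhammer (s + of_nat l) n \<noteq> 0"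
      using c s by (auto intro!: pochhammer_nonzero_if_Re_pos)
    ultimately show ?thesis
      unfolding K_def by (simp add: field_simps)
  qed
  finally show ?thesis .
qed

definition pair_pochhammer :: "complex \<Rightarrow> complex \<Rightarrow> nat \<Rightarrow> nat \<Rightarrow> complex" where
  "pair_pochhammer c s i j = pochhammer (c + of_nat j) i * pochhammer (1 - s - of_nat j) i"

lemma pair_pochhammer_Suc:
  "pair_pochhammer c s (Suc i) j = (c + of_nat j + of_nat i) * (1 - s - of_nat j + of_nat i) * pair_pochhammer c s i j"
  unfolding pair_pochhammer_def by (simp add: pochhammer_Suc mult_ac)

text \<open>The factor \<open>(c + j + i)(1 - s - j + i)\<close> equals \<open>(c + i)(1 - s + i) - \<lambda>(j)\<close>.\<close>

lemma quad_pochhammer_mult_pair_factor: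
  "(c + of_nat j + of_nat i) * (1 - s - of_nat j + of_nat i) * quad_pochhammer c s l j
     = ((c + of_nat i) * (1 - s + of_nat i) - of_nat l * (c + s - 1 + of_nat l)) * quad_pochhammer c s l j
       + quad_pochhammer c s (Suc l) j"
proof -
  have "quad_pochhammer c s (Suc l) j
      = quad_pochhammer c s l j * ((- of_nat j + of_nat l) * (of_nat j + c + s - 1 + of_nat l))"
    unfolding quad_pochhammer_def by (simp add: pochhammer_Suc mult_ac)
  then show ?thesis by (simp add: algebra_simps)
qed

lemma dual_hahn_mixed_moment:
  assumes c: "0 < Re c" and s: "0 < Re s" and "i \<le> k"
  shows "(\<Sum>j\<le>k. dual_hahn_weight c s k j * quad_pochhammer c s l j * pair_pochhammer c s i j)
       = (-1)^i * pochhammer c i * pochhammer (c + of_nat i) l * pochhammer (- of_nat k) l *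
         pochhammer (c + s) k / pochhammer s (k - i)"
  using \<open>i \<le> k\<close>
proof (induction i arbitrary: l)
  case 0
  then show ?case
    using dual_hahn_moment[OF c s, of k l] by (simp add: pair_pochhammer_def)
next
  case (Suc i)
  define M where "M = (\<lambda>i l. pochhammer c i * pochhammer (c + of_nat i) l *
    ((-1)^i * pochhammer (- of_nat k) l * pochhammer (c + s) k / pochhammer s (k - i)))"
  have IH: "(\<Sum>j\<le>k. dual_hahn_weight c s k j * quad_pochhammer c s l' j * pair_pochhammer c s i j) = M i l'" for l'
    unfolding M_def using Suc by (simp add: mult_ac)
  have M_Suc_right: "M i (Suc l) = M i l * ((c + of_nat i + of_nat l) * (- of_nat k + of_nat l))"
    unfolding M_def by (simp add: pochhammer_Suc)
  have ki: "k - i = Suc (k - Suc i)"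
    using Suc.prems by simp
  have M_Suc_left: "M (Suc i) l = - ((c + of_nat i + of_nat l) * (s + of_nat (k - Suc i))) * M i l"
  proof -
    have nz: "s + of_nat (k - Suc i) \<noteq> 0" "pochhammer s (k - Suc i) \<noteq> 0"
      using s pochhammer_nonzero_if_Re_pos[OF s] by (auto simp: complex_eq_iff)
    have "(c + of_nat i) * pochhammer (c + of_nat i + 1) l = pochhammer (c + of_nat i) l * (c + of_nat i + of_nat l)"
      by (metis pochhammer_Suc pochhammer_rec)
    then have shift: "pochhammer c (Suc i) * pochhammer (c + of_nat (Suc i)) l
        = pochhammer c i * pochhammer (c + of_nat i) l * (c + of_nat i + of_nat l)"
      by (simp add: pochhammer_Suc add_ac mult.assoc)
    have "M (Suc i) l = pochhammer c i * pochhammer (c + of_nat i) l * (c + of_nat i + of_nat l) *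
        ((-1)^Suc i * pochhammer (- of_nat k) l * pochhammer (c + s) k / pochhammer s (k - Suc i))"
      unfolding M_def shift ..
    also have "\<dots> = - ((c + of_nat i + of_nat l) * (s + of_nat (k - Suc i))) * (pochhammer c i * pochhammer (c + of_nat i) l *
        ((-1)^i * pochhammer (- of_nat k) l * pochhammer (c + s) k / (pochhammer s (k - Suc i) * (s + of_nat (k - Suc i)))))"
      using nz by (simp add: divide_simps)
    also have "\<dots> = - ((c + of_nat i + of_nat l) * (s + of_nat (k - Suc i))) * M i l"
      unfolding M_def ki pochhammer_Suc ..
    finally show ?thesis .
  qed
  define g where "g = (c + of_nat i) * (1 - s + of_nat i) - of_nat l * (c + s - 1 + of_nat l)"
  have "(\<Sum>j\<le>k. dual_hahn_weight c s k j * quad_pochhammer c s l j * pair_pochhammer c s (Suc i) j)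
      = (\<Sum>j\<le>k. dual_hahn_weight c s k j * pair_pochhammer c s i j *
          ((c + of_nat j + of_nat i) * (1 - s - of_nat j + of_nat i) * quad_pochhammer c s l j))"
    by (simp add: pair_pochhammer_Suc mult_ac)
  also have "\<dots> = g * M i l + M i (Suc l)"
    unfolding quad_pochhammer_mult_pair_factor g_def[symmetric] IH[symmetric]
    by (simp add: distrib_left sum.distrib sum_distrib_left mult_ac)
  also have "\<dots> = M (Suc i) l"
    using Suc.prems unfolding M_Suc_left M_Suc_right g_def by (simp add: of_nat_diff algebra_simps)
  finally show ?case
    by (simp add: M_def mult_ac)
qed

section \<open>Dual Hahn polynomials and their orthogonality\<close>

definition pair_coeff :: "complex \<Rightarrow> complex \<Rightarrow> nat \<Rightarrow> nat \<Rightarrow> complex" where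
  "pair_coeff c s i l = of_nat (i choose l) * pochhammer (c + of_nat l) (i - l) * pochhammer (1 - s) (i - l)"

lemma pair_coeff_eq_0: "i < l \<Longrightarrow> pair_coeff c s i l = 0"
  by (simp add: pair_coeff_def)

lemma pair_coeff_Suc_Suc:
  "pair_coeff c s (Suc i) (Suc l)
     = pair_coeff c s i (Suc l) * ((c + of_nat i) * (1 - s + of_nat i) - of_nat (Suc l) * (c + s - 1 + of_nat (Suc l)))
       + pair_coeff c s i l"
proof (cases "l < i")
  case True
  then obtain r where i: "i = Suc (l + r)"
    using less_imp_Suc_add by blast
  have binom: "of_nat (Suc l) * (of_nat (i choose Suc l) :: complex) = of_nat (Suc r) * of_nat (i choose l)"
    unfolding i using Suc_times_binomial_add[of l r] by (metis of_nat_mult)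
  have p1: "pochhammer (c + of_nat (Suc l)) (Suc r) = pochhammer (c + of_nat (Suc l)) r * (c + of_nat l + 1 + of_nat r)"
    and p2: "pochhammer (1 - s) (Suc r) = pochhammer (1 - s) r * (1 - s + of_nat r)"
    by (simp_all add: pochhammer_Suc algebra_simps)
  have p3: "pochhammer (c + of_nat l) (Suc r) = (c + of_nat l) * pochhammer (c + of_nat (Suc l)) r"
    by (simp add: pochhammer_rec add_ac)
  have d: "Suc i - Suc l = Suc r" "i - Suc l = r" "i - l = Suc r" and ci: "(of_nat i :: complex) = of_nat l + of_nat r + 1"
    using i by auto
  show ?thesis
    using binom unfolding pair_coeff_def binomial_Suc_Suc of_nat_add p1 p2 p3 d ci unfolding of_nat_Suc by algebra
next
  case False
  then show ?thesis
    by (cases "l = i") (simp_all add: pair_coeff_def)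
qed

lemma pair_pochhammer_expansion:
  "pair_pochhammer c s i j = (\<Sum>l\<le>i. pair_coeff c s i l * quad_pochhammer c s l j)"
proof (induction i)
  case 0
  then show ?case by (simp add: pair_pochhammer_def pair_coeff_def quad_pochhammer_def)
next
  case (Suc i)
  define g where "g = (\<lambda>l. (c + of_nat i) * (1 - s + of_nat i) - of_nat l * (c + s - 1 + of_nat l))"
  have "pair_pochhammer c s (Suc i) j
      = (\<Sum>l\<le>i. pair_coeff c s i l * ((c + of_nat j + of_nat i) * (1 - s - of_nat j + of_nat i) * quad_pochhammer c s l j))"
    unfolding pair_pochhammer_Suc Suc.IH sum_distrib_left by (simp add: mult_ac)
  also have "\<dots> = (\<Sum>l\<le>i. pair_coeff c s i l * g l * quad_pochhammer c s l j)
      + (\<Sum>l\<le>i. pair_coeff c s i l * quad_pochhammer c s (Suc l) j)"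
  proof -
    have "(c + of_nat i) * (1 - s + of_nat i) - of_nat l * (c + s - 1 + of_nat l) = g l" for l
      by (simp add: g_def)
    then show ?thesis
      unfolding quad_pochhammer_mult_pair_factor by (simp add: sum.distrib distrib_left mult_ac)
  qed
  also have "(\<Sum>l\<le>i. pair_coeff c s i l * g l * quad_pochhammer c s l j)
      = pair_coeff c s i 0 * g 0 * quad_pochhammer c s 0 j
        + (\<Sum>l\<le>i. pair_coeff c s i (Suc l) * g (Suc l) * quad_pochhammer c s (Suc l) j)"
    by (subst sum.atMost_Suc_shift[symmetric]) (simp add: pair_coeff_eq_0)
  also have "\<dots> + (\<Sum>l\<le>i. pair_coeff c s i l * quad_pochhammer c s (Suc l) j)
      = pair_coeff c s (Suc i) 0 * quad_pochhammer c s 0 j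
        + (\<Sum>l\<le>i. pair_coeff c s (Suc i) (Suc l) * quad_pochhammer c s (Suc l) j)"
  proof -
    have "pair_coeff c s (Suc i) 0 = pair_coeff c s i 0 * g 0"
      unfolding pair_coeff_def g_def by (simp add: pochhammer_Suc algebra_simps)
    moreover have "pair_coeff c s (Suc i) (Suc l) = pair_coeff c s i (Suc l) * g (Suc l) + pair_coeff c s i l" for l
      unfolding g_def by (rule pair_coeff_Suc_Suc)
    ultimately show ?thesis
      by (simp add: sum.distrib algebra_simps)
  qed
  also have "\<dots> = (\<Sum>l\<le>Suc i. pair_coeff c s (Suc i) l * quad_pochhammer c s l j)"
    by (rule sum.atMost_Suc_shift[symmetric])
  finally show ?case .
qed

lemma pair_coeff_sum:
  assumes c: "0 < Re c" and s: "0 < Re s" and "l \<le> m" and "m \<le> k"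
  shows "(\<Sum>i\<in>{l..m}. pochhammer (- of_nat m) i * pair_coeff c s i l /
           (pochhammer c i * pochhammer (1 - s - of_nat k) i * fact i))
       = pochhammer (- of_nat m) l * pochhammer (of_nat l - of_nat k) (m - l) /
         (pochhammer c l * fact l * pochhammer (1 - s - of_nat k) m)"
proof -
  obtain n where m: "m = l + n"
    using \<open>l \<le> m\<close> le_Suc_ex by blast
  define P where "P = pochhammer (1 - s - of_nat k)"
  define Q where "Q = pochhammer (1 - s - of_nat k + of_nat l)"
  have P_add: "P (l + t) = P l * Q t" for t
    unfolding P_def Q_def by (rule pochhammer_product')
  have nz: "P l \<noteq> 0" "Q n \<noteq> 0"
    using pochhammer_one_minus_nonzero[OF s, of "l + n" k] \<open>m \<le> k\<close> P_add[of n]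
    unfolding P_def m by auto
  have "(\<Sum>i\<in>{l..m}. pochhammer (- of_nat m) i * pair_coeff c s i l / (pochhammer c i * P i * fact i))
      = (\<Sum>t\<le>n. pochhammer (- of_nat m) (l + t) * pair_coeff c s (l + t) l / (pochhammer c (l + t) * P (l + t) * fact (l + t)))"
    unfolding m using sum.shift_bounds_cl_nat_ivl[of "\<lambda>i. pochhammer (- of_nat (l + n)) i * pair_coeff c s i l / (pochhammer c i * P i * fact i)" 0 l n]
    by (simp add: atLeast0AtMost add.commute)
  also have "\<dots> = pochhammer (- of_nat m) l / (pochhammer c l * fact l * P l) *
      (\<Sum>t\<le>n. pochhammer (- of_nat n) t * pochhammer (1 - s) t / (Q t * fact t))"
    unfolding sum_distrib_left
  proof (rule sum.cong[OF refl])
    fix t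
    have "pochhammer (- of_nat m) (l + t) = pochhammer (- of_nat m) l * pochhammer (- of_nat n :: complex) t"
      unfolding m using pochhammer_product'[of "- of_nat (l + n) :: complex" l t] by simp
    moreover have "pochhammer c (l + t) = pochhammer c l * pochhammer (c + of_nat l) t"
      by (rule pochhammer_product')
    moreover have "pair_coeff c s (l + t) l = of_nat ((l + t) choose l) * pochhammer (c + of_nat l) t * pochhammer (1 - s) t"
      unfolding pair_coeff_def by simp
    moreover have "(fact (l + t) :: complex) = of_nat ((l + t) choose l) * fact t * fact l"
      using binomial_fact[of l "l + t", where 'a=complex] by simp
    moreover have "pochhammer (c + of_nat l) t \<noteq> 0" "pochhammer c l \<noteq> 0"
      using c by (auto intro!: pochhammer_nonzero_if_Re_pos)
    ultimately show "pochhammer (- of_nat m) (l + t) * pair_coeff c s (l + t) l / (pochhammer c (l + t) * P (l + t) * fact (l + t))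
        = pochhammer (- of_nat m) l / (pochhammer c l * fact l * P l) *
          (pochhammer (- of_nat n) t * pochhammer (1 - s) t / (Q t * fact t))"
      using nz unfolding P_add by (simp add: field_simps)
  qed
  also have "\<dots> = pochhammer (- of_nat m) l / (pochhammer c l * fact l * P l) *
      (pochhammer (of_nat l - of_nat k) n / Q n)"
    using chu_vandermonde[OF nz(2)[unfolded Q_def], of "1 - s"] unfolding Q_def by simp
  finally show ?thesis
    using nz unfolding P_def[symmetric] m P_add by (simp add: field_simps)
qed

text \<open>\<open>dual_hahn c s k m j = R\<^sub>m(\<lambda>(j); c - 1, s - 1, k) = \<^sub>3F\<^sub>2(-m, -j, j + c + s - 1; c, -k; 1)\<close>.\<close>

definition dual_hahn :: "complex \<Rightarrow> complex \<Rightarrow> nat \<Rightarrow> nat \<Rightarrow> nat \<Rightarrow> complex" where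
  "dual_hahn c s k m j =
     (\<Sum>l\<le>m. quad_pochhammer c s l j * pochhammer (- of_nat m) l / (pochhammer c l * pochhammer (- of_nat k) l * fact l))"

lemma dual_hahn_pair_expansion:
  assumes c: "0 < Re c" and s: "0 < Re s" and "m \<le> k"
  shows "dual_hahn c s k m j = pochhammer (1 - s - of_nat k) m / pochhammer (- of_nat k) m *
     (\<Sum>i\<le>m. pochhammer (- of_nat m) i * pair_pochhammer c s i j /
        (pochhammer c i * pochhammer (1 - s - of_nat k) i * fact i))"
proof -
  define D where "D = (\<lambda>i. pochhammer c i * pochhammer (1 - s - of_nat k) i * fact i)"
  have "(\<Sum>i\<le>m. pochhammer (- of_nat m) i * pair_pochhammer c s i j / D i)
      = (\<Sum>i\<le>m. \<Sum>l\<le>m. quad_pochhammer c s l j * (pochhammer (- of_nat m) i * pair_coeff c s i l / D i))"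
  proof (rule sum.cong[OF refl])
    fix i
    assume "i \<in> {..m}"
    then have "pair_pochhammer c s i j = (\<Sum>l\<le>m. pair_coeff c s i l * quad_pochhammer c s l j)"
      unfolding pair_pochhammer_expansion by (intro sum.mono_neutral_left) (auto simp: pair_coeff_eq_0)
    then show "pochhammer (- of_nat m) i * pair_pochhammer c s i j / D i
        = (\<Sum>l\<le>m. quad_pochhammer c s l j * (pochhammer (- of_nat m) i * pair_coeff c s i l / D i))"
      by (simp add: sum_distrib_left sum_divide_distrib mult_ac)
  qed
  also have "\<dots> = (\<Sum>l\<le>m. quad_pochhammer c s l j * (\<Sum>i\<le>m. pochhammer (- of_nat m) i * pair_coeff c s i l / D i))"
    by (subst sum.swap) (simp only: sum_distrib_left)
  also have "\<dots> = (\<Sum>l\<le>m. quad_pochhammer c s l j * (\<Sum>i\<in>{l..m}. pochhammer (- of_nat m) i * pair_coeff c s i l / D i))"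
    by (intro sum.cong refl arg_cong[where f="(*) _"] sum.mono_neutral_right) (auto simp: pair_coeff_eq_0)
  also have "\<dots> = (\<Sum>l\<le>m. quad_pochhammer c s l j * (pochhammer (- of_nat m) l * pochhammer (of_nat l - of_nat k) (m - l) /
      (pochhammer c l * fact l * pochhammer (1 - s - of_nat k) m)))"
    unfolding D_def using \<open>m \<le> k\<close> by (intro sum.cong refl) (simp add: pair_coeff_sum[OF c s])
  finally have expansion: "(\<Sum>i\<le>m. pochhammer (- of_nat m) i * pair_pochhammer c s i j / D i) = \<dots>" .
  have nz: "pochhammer (1 - s - of_nat k) m \<noteq> 0" "pochhammer (- of_nat k :: complex) m \<noteq> 0"
    using pochhammer_one_minus_nonzero[OF s \<open>m \<le> k\<close>] \<open>m \<le> k\<close>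
    by (auto simp: pochhammer_of_nat_eq_0_iff)
  show ?thesis
    unfolding expansion[unfolded D_def] dual_hahn_def sum_distrib_left
  proof (rule sum.cong[OF refl])
    fix l
    assume "l \<in> {..m}"
    then have split: "pochhammer (- of_nat k :: complex) m = pochhammer (- of_nat k) l * pochhammer (of_nat l - of_nat k) (m - l)"
      using pochhammer_product[of l m "- of_nat k :: complex"] by (simp add: algebra_simps)
    moreover have "pochhammer c l \<noteq> 0"
      using c by (rule pochhammer_nonzero_if_Re_pos)
    ultimately show "quad_pochhammer c s l j * pochhammer (- of_nat m) l / (pochhammer c l * pochhammer (- of_nat k) l * fact l)
        = pochhammer (1 - s - of_nat k) m / pochhammer (- of_nat k) m *
          (quad_pochhammer c s l j * (pochhammer (- of_nat m) l * pochhammer (of_nat l - of_nat k) (m - l) /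
           (pochhammer c l * fact l * pochhammer (1 - s - of_nat k) m)))"
      using nz unfolding split by (simp add: field_simps)
  qed
qed

text \<open>Since \<open>(-i)\<^sub>m = 0\<close> for \<open>i < m\<close>, \<open>R\<^sub>m\<close> is orthogonal to every \<open>(c + j)\<^sub>i (1 - s - j)\<^sub>i\<close>
  with \<open>i < m\<close>; expanding \<open>R\<^sub>m\<^sub>'\<close> in these polynomials then yields orthogonality.\<close>

lemma dual_hahn_pair_moment:
  assumes c: "0 < Re c" and s: "0 < Re s" and "i \<le> k" and "m \<le> k"
  shows "(\<Sum>j\<le>k. dual_hahn_weight c s k j * dual_hahn c s k m j * pair_pochhammer c s i j)
       = (-1)^i * pochhammer c i * pochhammer (c + s) k / pochhammer s (k - i) *
         (pochhammer (- of_nat i) m / pochhammer c m)"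
proof -
  define X where "X = (-1)^i * pochhammer c i * pochhammer (c + s) k / pochhammer s (k - i)"
  have "(\<Sum>j\<le>k. dual_hahn_weight c s k j * dual_hahn c s k m j * pair_pochhammer c s i j)
      = (\<Sum>l\<le>m. pochhammer (- of_nat m) l / (pochhammer c l * pochhammer (- of_nat k) l * fact l) *
          (\<Sum>j\<le>k. dual_hahn_weight c s k j * quad_pochhammer c s l j * pair_pochhammer c s i j))"
    unfolding dual_hahn_def sum_distrib_left sum_distrib_right
    by (subst sum.swap) (simp add: mult_ac)
  also have "\<dots> = (\<Sum>l\<le>m. X * (pochhammer (- of_nat m) l * pochhammer (c + of_nat i) l / (pochhammer c l * fact l)))"
  proof (rule sum.cong[OF refl])
    fix l
    assume "l \<in> {..m}"
    then have "pochhammer (- of_nat k :: complex) l \<noteq> 0"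
      using \<open>m \<le> k\<close> by (simp add: pochhammer_of_nat_eq_0_iff)
    then show "pochhammer (- of_nat m) l / (pochhammer c l * pochhammer (- of_nat k) l * fact l) *
        (\<Sum>j\<le>k. dual_hahn_weight c s k j * quad_pochhammer c s l j * pair_pochhammer c s i j)
        = X * (pochhammer (- of_nat m) l * pochhammer (c + of_nat i) l / (pochhammer c l * fact l))"
      unfolding dual_hahn_mixed_moment[OF c s \<open>i \<le> k\<close>] X_def by (simp add: field_simps)
  qed
  also have "\<dots> = X * (pochhammer (- of_nat i) m / pochhammer c m)"
    unfolding sum_distrib_left[symmetric]
    using chu_vandermonde[OF pochhammer_nonzero_if_Re_pos[OF c], of m "c + of_nat i"] by simp
  finally show ?thesis
    by (simp only: X_def)
qed

definition dual_hahn_norm :: "complex \<Rightarrow> complex \<Rightarrow> nat \<Rightarrow> nat \<Rightarrow> complex" where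
  "dual_hahn_norm c s k m = pochhammer (1 - s - of_nat k) m * pochhammer (c + s) k * fact m /
     (pochhammer (- of_nat k) m * pochhammer c m * pochhammer s k)"

lemma dual_hahn_orthogonal:
  assumes c: "0 < Re c" and s: "0 < Re s" and "m \<le> k" and "m' \<le> k"
  shows "(\<Sum>j\<le>k. dual_hahn_weight c s k j * dual_hahn c s k m j * dual_hahn c s k m' j)
       = (if m = m' then dual_hahn_norm c s k m else 0)"
proof -
  define \<kappa> where "\<kappa> = pochhammer (1 - s - of_nat k) m' / pochhammer (- of_nat k) m'"
  have "(\<Sum>j\<le>k. dual_hahn_weight c s k j * dual_hahn c s k m j * dual_hahn c s k m' j)
      = \<kappa> * (\<Sum>i\<le>m'. pochhammer (- of_nat m') i / (pochhammer c i * pochhammer (1 - s - of_nat k) i * fact i) *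
          (\<Sum>j\<le>k. dual_hahn_weight c s k j * dual_hahn c s k m j * pair_pochhammer c s i j))"
    unfolding dual_hahn_pair_expansion[OF c s \<open>m' \<le> k\<close>] \<kappa>_def sum_distrib_left sum_distrib_right
    by (subst sum.swap) (simp add: mult_ac)
  also have "\<dots> = \<kappa> * (\<Sum>i\<le>m'. pochhammer (c + s) k / (pochhammer c m * pochhammer s k) *
      (pochhammer (- of_nat m') i * pochhammer (- of_nat i) m / fact i))"
  proof (intro sum.cong refl arg_cong[where f="(*) \<kappa>"])
    fix i
    assume "i \<in> {..m'}"
    then have ik: "i \<le> k"
      using \<open>m' \<le> k\<close> by simp
    have "pochhammer s k = (-1)^i * (pochhammer (1 - s - of_nat k) i * pochhammer s (k - i))"
      unfolding pochhammer_one_minus_times_pochhammer[OF ik] by simp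
    moreover have "pochhammer c i \<noteq> 0" "pochhammer c m \<noteq> 0" "pochhammer s (k - i) \<noteq> 0"
      using c s by (auto intro!: pochhammer_nonzero_if_Re_pos)
    moreover have "pochhammer (1 - s - of_nat k) i \<noteq> 0"
      using s ik by (rule pochhammer_one_minus_nonzero)
    ultimately show "pochhammer (- of_nat m') i / (pochhammer c i * pochhammer (1 - s - of_nat k) i * fact i) *
        (\<Sum>j\<le>k. dual_hahn_weight c s k j * dual_hahn c s k m j * pair_pochhammer c s i j)
        = pochhammer (c + s) k / (pochhammer c m * pochhammer s k) *
          (pochhammer (- of_nat m') i * pochhammer (- of_nat i) m / fact i)"
      unfolding dual_hahn_pair_moment[OF c s ik \<open>m \<le> k\<close>] by (simp add: field_simps)
  qed
  also have "\<dots> = (if m = m' then dual_hahn_norm c s k m else 0)"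
    unfolding sum_distrib_left[symmetric] pochhammer_minus_of_nat_delta_sum \<kappa>_def dual_hahn_norm_def
    by (auto simp: mult_ac)
  finally show ?thesis .
qed

lemma dual_hahn_parseval:
  assumes c: "0 < Re c" and s: "0 < Re s"
  shows "(\<Sum>j\<le>k. dual_hahn_weight c s k j * (\<Sum>m\<le>k. of_nat (k choose m) * dual_hahn c s k m j * \<alpha> m) *
            (\<Sum>m\<le>k. of_nat (k choose m) * dual_hahn c s k m j * \<beta> m))
       = (\<Sum>m\<le>k. of_nat (k choose m) ^ 2 * dual_hahn_norm c s k m * (\<alpha> m * \<beta> m))"
proof -
  have "(\<Sum>j\<le>k. dual_hahn_weight c s k j * (\<Sum>m\<le>k. of_nat (k choose m) * dual_hahn c s k m j * \<alpha> m) *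
            (\<Sum>m\<le>k. of_nat (k choose m) * dual_hahn c s k m j * \<beta> m))
      = (\<Sum>j\<le>k. \<Sum>m'\<le>k. \<Sum>m\<le>k. dual_hahn_weight c s k j *
          (of_nat (k choose m) * dual_hahn c s k m j * \<alpha> m) * (of_nat (k choose m') * dual_hahn c s k m' j * \<beta> m'))"
    by (simp only: sum_distrib_left sum_distrib_right)
  also have "\<dots> = (\<Sum>m'\<le>k. \<Sum>m\<le>k. \<Sum>j\<le>k. dual_hahn_weight c s k j *
          (of_nat (k choose m) * dual_hahn c s k m j * \<alpha> m) * (of_nat (k choose m') * dual_hahn c s k m' j * \<beta> m'))"
    by (subst sum.swap) (intro sum.cong refl sum.swap)
  also have "\<dots> = (\<Sum>m'\<le>k. \<Sum>m\<le>k. of_nat (k choose m) * \<alpha> m * (of_nat (k choose m') * \<beta> m') *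
      (\<Sum>j\<le>k. dual_hahn_weight c s k j * dual_hahn c s k m j * dual_hahn c s k m' j))"
    by (simp add: sum_distrib_left mult_ac)
  also have "\<dots> = (\<Sum>m'\<le>k. \<Sum>m\<le>k. of_nat (k choose m) * \<alpha> m * (of_nat (k choose m') * \<beta> m') *
      (if m = m' then dual_hahn_norm c s k m else 0))"
    by (intro sum.cong refl) (simp add: dual_hahn_orthogonal[OF c s])
  also have "\<dots> = (\<Sum>m\<le>k. of_nat (k choose m) ^ 2 * dual_hahn_norm c s k m * (\<alpha> m * \<beta> m))"
    by (simp add: power2_eq_square mult_ac if_distrib cong: if_cong)
  finally show ?thesis .
qed

lemma choose_square_mult_dual_hahn_norm:
  assumes c: "0 < Re c" and s: "0 < Re s" and "m \<le> k"
  shows "of_nat (k choose m) ^ 2 * dual_hahn_norm c s k m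
       = pochhammer (c + s) k / pochhammer s k *
         (pochhammer (- of_nat k) m * pochhammer (1 - s - of_nat k) m / (pochhammer c m * fact m))"
proof -
  have "pochhammer (- of_nat k :: complex) m \<noteq> 0"
    using \<open>m \<le> k\<close> by (simp add: pochhammer_of_nat_eq_0_iff)
  moreover have "pochhammer c m \<noteq> 0" "pochhammer s k \<noteq> 0"
    using c s by (auto intro!: pochhammer_nonzero_if_Re_pos)
  moreover have "((-1::complex)^m)^2 = 1"
    by (simp flip: power_mult)
  then have "(of_nat (k choose m) :: complex) ^ 2 = pochhammer (- of_nat k) m ^ 2 / fact m ^ 2"
    unfolding pochhammer_minus_of_nat power_mult_distrib by simp
  ultimately show ?thesis
    unfolding dual_hahn_norm_def by (simp add: field_simps power2_eq_square)
qed

section \<open>Bilinear sums of continuous Hahn polynomials\<close>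

text \<open>The \<open>\<^sub>3F\<^sub>2\<close> of \<open>p\<^sub>j\<close>, truncated at \<open>k\<close> instead of \<open>j\<close> (the terms beyond \<open>j\<close> vanish) so that
  all \<open>j \<le> k\<close> share one summation range.\<close>

definition hahn_sum :: "complex \<Rightarrow> complex \<Rightarrow> complex \<Rightarrow> complex \<Rightarrow> nat \<Rightarrow> nat \<Rightarrow> complex" where
  "hahn_sum c s A u k j =
     (\<Sum>n\<le>k. quad_pochhammer c s n j * pochhammer u n / (pochhammer c n * pochhammer A n * fact n))"

lemma hahn_sum_dual_hahn_expansion:
  assumes c: "0 < Re c" and A: "0 < Re A"
  shows "pochhammer A k * hahn_sum c s A u k j
       = (\<Sum>m\<le>k. of_nat (k choose m) * dual_hahn c s k m j * (pochhammer u m * pochhammer (A - u) (k - m)))"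
proof -
  define g where "g = (\<lambda>n. quad_pochhammer c s n j / (pochhammer c n * fact n))"
  define e where "e = (\<lambda>m. pochhammer u m * pochhammer (A - u) (k - m))"
  have "pochhammer A k * hahn_sum c s A u k j = (\<Sum>n\<le>k. g n * (pochhammer u n * pochhammer (A + of_nat n) (k - n)))"
    unfolding hahn_sum_def sum_distrib_left
  proof (rule sum.cong[OF refl])
    fix n
    assume "n \<in> {..k}"
    then have "pochhammer A k = pochhammer A n * pochhammer (A + of_nat n) (k - n)"
      by (simp add: pochhammer_product)
    moreover have "pochhammer A n \<noteq> 0" "pochhammer c n \<noteq> 0"
      using A c by (auto intro!: pochhammer_nonzero_if_Re_pos)
    ultimately show "pochhammer A k * (quad_pochhammer c s n j * pochhammer u n / (pochhammer c n * pochhammer A n * fact n))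
        = g n * (pochhammer u n * pochhammer (A + of_nat n) (k - n))"
      unfolding g_def by (simp add: field_simps)
  qed
  also have "\<dots> = (\<Sum>n\<le>k. \<Sum>m\<in>{n..k}. g n * of_nat ((k - n) choose (m - n)) * e m)"
    unfolding e_def by (intro sum.cong refl) (simp add: pochhammer_shifted_binomial_sum sum_distrib_left mult_ac)
  also have "\<dots> = (\<Sum>m\<le>k. \<Sum>n\<le>m. g n * of_nat ((k - n) choose (m - n)) * e m)"
    by (rule sum_atMost_triangle_swap)
  also have "\<dots> = (\<Sum>m\<le>k. of_nat (k choose m) * dual_hahn c s k m j * e m)"
    unfolding dual_hahn_def sum_distrib_left sum_distrib_right
  proof (intro sum.cong refl)
    fix m n
    assume "m \<in> {..k}" "n \<in> {..m}"
    then have "n \<le> m" "m \<le> k"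
      by simp_all
    moreover have "pochhammer (- of_nat k :: complex) n \<noteq> 0"
      using \<open>n \<le> m\<close> \<open>m \<le> k\<close> by (simp add: pochhammer_of_nat_eq_0_iff)
    ultimately have "of_nat ((k - n) choose (m - n))
        = of_nat (k choose m) * pochhammer (- of_nat m) n / pochhammer (- of_nat k :: complex) n"
      using choose_diff_mult_pochhammer_minus_of_nat[of n m k, where 'a=complex] by (simp add: field_simps)
    then show "g n * of_nat ((k - n) choose (m - n)) * e m
        = of_nat (k choose m) * (quad_pochhammer c s n j * pochhammer (- of_nat m) n /
            (pochhammer c n * pochhammer (- of_nat k) n * fact n)) * e m"
      unfolding g_def by (simp add: mult_ac)
  qed
  finally show ?thesis
    unfolding e_def .
qed

lemma hahn_sum_bilinear:
  assumes c: "0 < Re c" and s: "0 < Re s" and A: "0 < Re A" and A': "0 < Re A'"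
  shows "(\<Sum>j\<le>k. dual_hahn_weight c s k j * hahn_sum c s A u k j * hahn_sum c s A' v k j)
       = pochhammer (c + s) k / (pochhammer A k * pochhammer A' k * pochhammer s k) *
         (\<Sum>m\<le>k. pochhammer (- of_nat k) m * pochhammer (1 - s - of_nat k) m / (pochhammer c m * fact m) *
           ((pochhammer u m * pochhammer (A - u) (k - m)) * (pochhammer v m * pochhammer (A' - v) (k - m))))"
proof -
  have nz: "pochhammer A k \<noteq> 0" "pochhammer A' k \<noteq> 0"
    using A A' by (auto intro!: pochhammer_nonzero_if_Re_pos)
  have "pochhammer A k * pochhammer A' k *
      (\<Sum>j\<le>k. dual_hahn_weight c s k j * hahn_sum c s A u k j * hahn_sum c s A' v k j)
      = (\<Sum>j\<le>k. dual_hahn_weight c s k j * (pochhammer A k * hahn_sum c s A u k j) *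
          (pochhammer A' k * hahn_sum c s A' v k j))"
    by (simp add: sum_distrib_left mult_ac)
  also have "\<dots> = (\<Sum>m\<le>k. of_nat (k choose m) ^ 2 * dual_hahn_norm c s k m *
      ((pochhammer u m * pochhammer (A - u) (k - m)) * (pochhammer v m * pochhammer (A' - v) (k - m))))"
    unfolding hahn_sum_dual_hahn_expansion[OF c A] hahn_sum_dual_hahn_expansion[OF c A'] by (rule dual_hahn_parseval[OF c s])
  also have "\<dots> = pochhammer (c + s) k / pochhammer s k *
      (\<Sum>m\<le>k. pochhammer (- of_nat k) m * pochhammer (1 - s - of_nat k) m / (pochhammer c m * fact m) *
        ((pochhammer u m * pochhammer (A - u) (k - m)) * (pochhammer v m * pochhammer (A' - v) (k - m))))"
    unfolding sum_distrib_left by (intro sum.cong refl) (simp add: choose_square_mult_dual_hahn_norm[OF c s])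
  finally have product: "pochhammer A k * pochhammer A' k *
      (\<Sum>j\<le>k. dual_hahn_weight c s k j * hahn_sum c s A u k j * hahn_sum c s A' v k j) = \<dots>" .
  have "(\<Sum>j\<le>k. dual_hahn_weight c s k j * hahn_sum c s A u k j * hahn_sum c s A' v k j)
      = pochhammer A k * pochhammer A' k *
        (\<Sum>j\<le>k. dual_hahn_weight c s k j * hahn_sum c s A u k j * hahn_sum c s A' v k j) / (pochhammer A k * pochhammer A' k)"
    using nz by simp
  then show ?thesis
    unfolding product by simp
qed

lemma hypergeom_minus_of_nat:
  assumes "n \<le> N"
  shows "hypergeom (- of_nat n # as) bs z = (\<Sum>j\<le>N. hyp_term (- of_nat n # as) bs z j)"
  unfolding hypergeom_def using assms
  by (intro suminf_finite) (auto simp: hyp_term_def pochhammer_of_nat_eq_0_lemma)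

lemma cont_hahn_eq_hahn_sum:
  assumes "j \<le> k"
  shows "cont_hahn j x a b a d
       = \<i>^j * pochhammer (2 * a) j * pochhammer (a + d) j / fact j * hahn_sum (2 * a) (b + d) (a + d) (a + \<i> * of_real x) k j"
proof -
  have params: "of_nat j + a + b + a + d - 1 = of_nat j + 2 * a + (b + d) - 1" "a + a = 2 * a"
    by (simp_all add: algebra_simps)
  show ?thesis
    unfolding cont_hahn_def hypergeom_minus_of_nat[OF assms] params hahn_sum_def hyp_term_def quad_pochhammer_def
    by (simp add: sum_distrib_left mult_ac)
qed

lemma cont_hahn_product_summand:
  assumes a: "0 < Re a" and bd: "0 < Re (b + d)" and ad: "0 < Re (a + d)" and ad': "0 < Re (a + d')"
    and "b + d = b' + d'" and "j \<le> k"
  shows "pochhammer (- of_nat k) j * pochhammer (2 * a + b + d) (2 * j) * fact j /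
      (pochhammer (2 * a) j * pochhammer (b + d) j * pochhammer (2 * a + b + d + of_nat j - 1) j
       * pochhammer (a + d) j * pochhammer (a + d') j * pochhammer (2 * a + b + d + of_nat k) j)
      * cont_hahn j x a b a d * cont_hahn j y a b' a d'
    = dual_hahn_weight (2 * a) (b + d) k j * hahn_sum (2 * a) (b + d) (a + d) (a + \<i> * of_real x) k j
      * hahn_sum (2 * a) (b + d) (a + d') (a + \<i> * of_real y) k j"
proof -
  define c where "c = 2 * a"
  define s where "s = b + d"
  have c: "0 < Re c" and s: "0 < Re s"
    using a bd by (simp_all add: c_def s_def)
  have "pochhammer c j \<noteq> 0" "pochhammer (a + d) j \<noteq> 0" "pochhammer (a + d') j \<noteq> 0"
    "pochhammer s j \<noteq> 0" "pochhammer (c + s + of_nat k) j \<noteq> 0"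
    using c s ad ad' by (auto intro!: pochhammer_nonzero_if_Re_pos)
  moreover have "pochhammer (c + s - 1 + of_nat j) j \<noteq> 0"
    using c s by (intro pochhammer_shifted_nonzero_if_Re_pos) simp
  moreover have "\<i>^j * \<i>^j = ((-1)^j :: complex)"
    by (simp flip: power_mult_distrib)
  moreover have params: "c + b + d = c + s" "c + b + d + of_nat j - 1 = c + s - 1 + of_nat j" "b' + d' = s"
    using \<open>b + d = b' + d'\<close> by (simp_all add: s_def)
  ultimately show ?thesis
    unfolding cont_hahn_eq_hahn_sum[OF \<open>j \<le> k\<close>] dual_hahn_weight_def c_def[symmetric] s_def[symmetric] params
    by (simp add: field_simps)
qed

lemma cont_hahn_product_sum:
  assumes "0 < Re a" and "0 < Re (b + d)" and "0 < Re (a + d)" and "0 < Re (a + d')" and "b + d = b' + d'"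
  shows "(\<Sum>j=0..k. pochhammer (- of_nat k) j * pochhammer (2 * a + b + d) (2 * j) * fact j /
      (pochhammer (2 * a) j * pochhammer (b + d) j * pochhammer (2 * a + b + d + of_nat j - 1) j
       * pochhammer (a + d) j * pochhammer (a + d') j * pochhammer (2 * a + b + d + of_nat k) j)
      * cont_hahn j x a b a d * cont_hahn j y a b' a d')
    = (\<Sum>j\<le>k. dual_hahn_weight (2 * a) (b + d) k j * hahn_sum (2 * a) (b + d) (a + d) (a + \<i> * of_real x) k j
      * hahn_sum (2 * a) (b + d) (a + d') (a + \<i> * of_real y) k j)"
  unfolding atLeast0AtMost by (intro sum.cong refl cont_hahn_product_summand[OF assms]) simp

lemma hypergeom_four_f_three_terminating:
  assumes D: "0 < Re D" and D': "0 < Re D'"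
  shows "hypergeom [- of_nat k, e, u, v] [c, 1 - D - of_nat k, 1 - D' - of_nat k] 1
       = (\<Sum>m\<le>k. pochhammer (- of_nat k) m * pochhammer e m / (pochhammer c m * fact m) *
           ((pochhammer u m * pochhammer D (k - m)) * (pochhammer v m * pochhammer D' (k - m))))
         / (pochhammer D k * pochhammer D' k)"
  unfolding hypergeom_minus_of_nat[OF order_refl] sum_divide_distrib
proof (rule sum.cong[OF refl])
  fix m
  assume "m \<in> {..k}"
  then have m: "m \<le> k"
    by simp
  have "pochhammer D k * pochhammer D' k * hyp_term [- of_nat k, e, u, v] [c, 1 - D - of_nat k, 1 - D' - of_nat k] 1 m
    = pochhammer D k / pochhammer (1 - D - of_nat k) m * (pochhammer D' k / pochhammer (1 - D' - of_nat k) m) *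
      (pochhammer (- of_nat k) m * pochhammer e m / (pochhammer c m * fact m) * (pochhammer u m * pochhammer v m))"
    unfolding hyp_term_def by (simp add: divide_inverse inverse_mult_distrib mult_ac)
  also have "\<dots> = ((-1)^m * (-1)^m) * pochhammer D (k - m) * pochhammer D' (k - m) *
      (pochhammer (- of_nat k) m * pochhammer e m / (pochhammer c m * fact m) * (pochhammer u m * pochhammer v m))"
    unfolding pochhammer_div_reflect[OF m pochhammer_one_minus_nonzero[OF D m]]
      pochhammer_div_reflect[OF m pochhammer_one_minus_nonzero[OF D' m]]
    by (simp only: mult_ac)
  also have "(-1::complex)^m * (-1)^m = 1"
    by (simp flip: power_add)
  finally have "pochhammer D k * pochhammer D' k * hyp_term [- of_nat k, e, u, v] [c, 1 - D - of_nat k, 1 - D' - of_nat k] 1 m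
    = pochhammer (- of_nat k) m * pochhammer e m / (pochhammer c m * fact m) *
      ((pochhammer u m * pochhammer D (k - m)) * (pochhammer v m * pochhammer D' (k - m)))"
    by (simp add: mult_ac)
  moreover have "pochhammer D k \<noteq> 0" "pochhammer D' k \<noteq> 0"
    using D D' by (auto intro!: pochhammer_nonzero_if_Re_pos)
  ultimately show "hyp_term [- of_nat k, e, u, v] [c, 1 - D - of_nat k, 1 - D' - of_nat k] 1 m
    = pochhammer (- of_nat k) m * pochhammer e m / (pochhammer c m * fact m) *
      ((pochhammer u m * pochhammer D (k - m)) * (pochhammer v m * pochhammer D' (k - m)))
      / (pochhammer D k * pochhammer D' k)"
    by (intro eq_divide_imp) (simp_all add: ac_simps)
qed

theorem corollary2p5:
  fixes a :: real and b d b' d' :: complex and x y :: real and k :: nat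
  assumes "a > 0"
    and "Re b > 0" and "Re d > 0" and "Re b' > 0" and "Re d' > 0"
    and "b + d = b' + d'"
    and "cnj d = b" and "cnj d' = b'"
  shows "(\<Sum>j=0..k.
      pochhammer (- of_nat k) j * pochhammer (2 * of_real a + b + d) (2 * j) * fact j /
      (pochhammer (2 * of_real a) j * pochhammer (b + d) j
       * pochhammer (2 * of_real a + b + d + of_nat j - 1) j
       * pochhammer (of_real a + d) j * pochhammer (of_real a + d') j
       * pochhammer (2 * of_real a + b + d + of_nat k) j)
      * cont_hahn j x (of_real a) b (of_real a) d
      * cont_hahn j y (of_real a) b' (of_real a) d')
    = pochhammer (d - \<i> * of_real x) k * pochhammer (d' - \<i> * of_real y) k
        * pochhammer (2 * of_real a + b + d) k
      / (pochhammer (of_real a + d) k * pochhammer (of_real a + d') k * pochhammer (b + d) k)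
      * hypergeom [- of_nat k, 1 - of_nat k - b - d, of_real a + \<i> * of_real x, of_real a + \<i> * of_real y]
                  [2 * of_real a, 1 - of_nat k - d + \<i> * of_real x, 1 - of_nat k - d' + \<i> * of_real y] 1"
proof -
  \<comment> \<open>Only \<open>0 < Re (b + d)\<close> is needed of the hypotheses on \<open>b\<close> and \<open>b'\<close>.\<close>
  have pos: "0 < Re (complex_of_real a)" "0 < Re (2 * complex_of_real a)" "0 < Re (b + d)"
    "0 < Re (of_real a + d)" "0 < Re (of_real a + d')" "0 < Re (d - \<i> * of_real x)" "0 < Re (d' - \<i> * of_real y)"
    using assms by simp_all
  have nz: "pochhammer (of_real a + d) k \<noteq> 0" "pochhammer (of_real a + d') k \<noteq> 0" "pochhammer (b + d) k \<noteq> 0"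
    "pochhammer (d - \<i> * of_real x) k \<noteq> 0" "pochhammer (d' - \<i> * of_real y) k \<noteq> 0"
    using pos by (auto intro!: pochhammer_nonzero_if_Re_pos)
  have params: "1 - of_nat k - d + \<i> * of_real x = 1 - (d - \<i> * of_real x) - of_nat k"
    "1 - of_nat k - d' + \<i> * of_real y = 1 - (d' - \<i> * of_real y) - of_nat k"
    "1 - (b + d) - of_nat k = 1 - of_nat k - b - d" "2 * complex_of_real a + (b + d) = 2 * of_real a + b + d"
    "of_real a + d - (of_real a + \<i> * of_real x) = d - \<i> * of_real x"
    "of_real a + d' - (of_real a + \<i> * of_real y) = d' - \<i> * of_real y"
    by simp_all
  show ?thesis
    unfolding cont_hahn_product_sum[OF pos(1,3,4,5) assms(6)] hahn_sum_bilinear[OF pos(2,3,4,5)] params hypergeom_four_f_three_terminating[OF pos(6,7)]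
    using nz by (simp add: field_simps)
qed

end
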